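(* Let $A$ be an $n\times n$ Hermitian matrix ($n\ge2$) with eigenvalues $\lambda_1\ge\dots\ge\lambda_n$ and corresponding orthonormal eigenvectors $v_1,\dots,v_n$. Let $u\in\mathbb C^n$ be a unit vector, and let $\mu_1\ge\dots\ge\mu_{n-1}$ be the eigenvalues of the compression $B=P_uAP_u|_{u^\perp}$, $P_u=I-uu^*$. Set $U_\ell(u):=\sum_{i=\ell}^n|\langle u,v_i\rangle|^2$ and $L_{r+1}(u):=\sum_{i=1}^{r+1}|\langle u,v_i\rangle|^2$. Then for all $1\le\ell\le r\le n-1$ with $U_\ell(u)\ne0$ and $L_{r+1}(u)\ne0$, $$\sum_{j=\ell}^r\lambda_{j+1}+\sum_{j=\ell}^r\frac{|\langle u,v_{j+1}\rangle|^2}{L_{r+1}(u)}(\lambda_\ell-\lambda_{j+1})\le\sum_{j=\ell}^r\mu_j\le\sum_{j=\ell}^r\lambda_j-\sum_{j=\ell}^r\frac{|\langle u,v_j\rangle|^2}{U_\ell(u)}(\lambda_j-\lambda_{r+1}).$$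
   Context: $B$ is the compression of $A$ onto the hyperplane $u^\perp$, i.e. the operator $x\mapsto P_uAx$ on $u^\perp$ (equivalently $U^*AU$ for $U$ with orthonormal columns spanning $u^\perp$). *)

theory Defs
  imports "Jordan_Normal_Form.Matrix" "Jordan_Normal_Form.Char_Poly"
begin

definition adj :: "complex mat \<Rightarrow> complex mat" where
  "adj M = mat (dim_col M) (dim_row M) (\<lambda>(i,j). cnj (M $$ (j,i)))"

definition hermitian_mat :: "complex mat \<Rightarrow> bool" where
  "hermitian_mat M \<longleftrightarrow> adj M = M"

end

(* Let y_1, ..., y_(n-1) be orthonormal eigenvectors of the compression, viewed in the hyperplane
   u^perp of C^n. If |I| + k <= |J|, some k-dimensional subspace X of span {y_j | j in J} is
   orthogonal to every v_i with i in I. Computing the trace of A on X in both eigenbases gives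
   sum_j mu_j p_j = sum_i lambda_i q_i, where the weights 0 <= p_j <= 1 vanish outside J,
   the weights q_i >= 0 vanish on I, and both families sum to k. Since X is orthogonal to u,
   Bessel's inequality for an orthonormal basis of X extended by the normalised projection of u
   onto span {v_i | i not in I} sharpens q_i <= 1 to q_i <= 1 - |<u,v_i>|^2 / S with
   S = sum_(i not in I) |<u,v_i>|^2. The bathtub principle then bounds both sides of the trace
   identity: I = {1..l-1}, J = {1..r} gives the upper bound and I = {r+2..n}, J = {l..n-1}
   the lower one. *)

theory Submission
  imports Defs
begin

lemma adj_carrier [simp]: "M \<in> carrier_mat a b \<Longrightarrow> adj M \<in> carrier_mat b a"
  unfolding adj_def carrier_mat_def by auto

lemma dim_adj [simp]: "dim_row (adj M) = dim_col M" "dim_col (adj M) = dim_row M"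
  unfolding adj_def by auto

lemma index_adj [simp]: "i < dim_col M \<Longrightarrow> j < dim_row M \<Longrightarrow> adj M $$ (i, j) = cnj (M $$ (j, i))"
  unfolding adj_def by auto

lemma adj_adj [simp]: "adj (adj M) = M"
  by (rule eq_matI) auto

lemma adj_one [simp]: "adj (1\<^sub>m n) = 1\<^sub>m n"
  by (rule eq_matI) auto

lemma adj_zero [simp]: "adj (0\<^sub>m a b) = 0\<^sub>m b a"
  by (rule eq_matI) auto

lemma adj_mult:
  assumes "A \<in> carrier_mat a b" "B \<in> carrier_mat b c"
  shows "adj (A * B) = adj B * adj A"
  using assms by (intro eq_matI) (auto simp: scalar_prod_def cnj_sum mult.commute)

lemma adj_four_block_mat:
  assumes "A \<in> carrier_mat a a'" "B \<in> carrier_mat a b'" "C \<in> carrier_mat b a'" "D \<in> carrier_mat b b'"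
  shows "adj (four_block_mat A B C D) = four_block_mat (adj A) (adj C) (adj B) (adj D)"
  using assms by (intro eq_matI) (auto simp: four_block_mat_def)

lemma mult_adj_vec_index:
  assumes "M \<in> carrier_mat a b" "x \<in> carrier_vec a" "i < b"
  shows "(adj M *\<^sub>v x) $ i = x \<bullet>c col M i"
  using assms by (auto simp: scalar_prod_def mult.commute intro!: sum.cong)

lemma conjugate_unit_vec [simp]: "conjugate (unit_vec n i :: complex vec) = unit_vec n i"
  by (rule eq_vecI) (auto simp: unit_vec_def)

lemma cscalar_prod_swap:
  assumes "x \<in> carrier_vec n" "y \<in> carrier_vec n"
  shows "x \<bullet>c y = cnj (y \<bullet>c x)"
  using assms by (auto simp: scalar_prod_def cnj_sum mult.commute)

lemma cscalar_prod_adj: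
  assumes M: "M \<in> carrier_mat a b" and x: "x \<in> carrier_vec b" and y: "y \<in> carrier_vec a"
  shows "(M *\<^sub>v x) \<bullet>c y = x \<bullet>c (adj M *\<^sub>v y)"
proof -
  have "(M *\<^sub>v x) \<bullet>c y = (\<Sum>i<a. \<Sum>j<b. x $ j * (M $$ (i, j) * cnj (y $ i)))"
    using M x y by (auto simp: scalar_prod_def lessThan_atLeast0 sum_distrib_left sum_distrib_right mult_ac)
  also have "\<dots> = (\<Sum>j<b. \<Sum>i<a. x $ j * (M $$ (i, j) * cnj (y $ i)))"
    by (rule sum.swap)
  also have "\<dots> = x \<bullet>c (adj M *\<^sub>v y)"
    using M x y by (auto simp: scalar_prod_def lessThan_atLeast0 cnj_sum sum_distrib_left
        intro!: sum.cong)
  finally show ?thesis .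
qed

lemma isometry_cscalar_prod:
  assumes M: "M \<in> carrier_mat a b" and MM: "adj M * M = 1\<^sub>m b"
    and x: "x \<in> carrier_vec b" and y: "y \<in> carrier_vec b"
  shows "(M *\<^sub>v x) \<bullet>c (M *\<^sub>v y) = x \<bullet>c y"
proof -
  have "adj M *\<^sub>v (M *\<^sub>v y) = (adj M * M) *\<^sub>v y"
    using assoc_mult_mat_vec[OF adj_carrier[OF M] M y] by simp
  then show ?thesis
    using cscalar_prod_adj[OF M x] M MM x y by simp
qed

lemma unitary_mult_adj:
  assumes "M \<in> carrier_mat n n" "adj M * M = 1\<^sub>m n"
  shows "M * adj M = 1\<^sub>m n"
  using mat_mult_left_right_inverse[OF adj_carrier assms(1)] assms by simp

definition sq_norm :: "complex vec \<Rightarrow> real" where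
  "sq_norm x = (\<Sum>k<dim_vec x. (cmod (x $ k))\<^sup>2)"

lemma cscalar_prod_self: "x \<bullet>c x = complex_of_real (sq_norm x)"
  unfolding sq_norm_def scalar_prod_def
  by (auto simp: lessThan_atLeast0 complex_norm_square simp del: of_real_power intro!: sum.cong)

lemma sq_norm_eq_0_iff: "x \<in> carrier_vec n \<Longrightarrow> sq_norm x = 0 \<longleftrightarrow> x = 0\<^sub>v n"
  using conjugate_square_eq_0_vec[of x n] by (simp add: cscalar_prod_self)

lemma sq_norm_nonneg: "0 \<le> sq_norm x"
  unfolding sq_norm_def by (simp add: sum_nonneg)

lemma cscalar_prod_normalize:
  assumes x: "x \<in> carrier_vec n" and nz: "sq_norm x \<noteq> 0"
  defines "c \<equiv> complex_of_real (1 / sqrt (sq_norm x))"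
  shows "(c \<cdot>\<^sub>v x) \<bullet>c (c \<cdot>\<^sub>v x) = 1"
proof -
  have "(c \<cdot>\<^sub>v x) \<bullet>c (c \<cdot>\<^sub>v x) = c * cnj c * (x \<bullet>c x)"
    using x by (simp add: conjugate_smult_vec)
  also have "\<dots> = complex_of_real ((1 / sqrt (sq_norm x))\<^sup>2 * sq_norm x)"
    by (simp add: c_def cscalar_prod_self power2_eq_square flip: of_real_mult)
  also have "(1 / sqrt (sq_norm x))\<^sup>2 * sq_norm x = 1"
    using nz sq_norm_nonneg[of x] by (simp add: power_divide)
  finally show ?thesis by simp
qed

lemma nth_carrier_vec: "set xs \<subseteq> carrier_vec n \<Longrightarrow> t < length xs \<Longrightarrow> xs ! t \<in> carrier_vec n"
  by auto

definition orthonormal :: "complex vec list \<Rightarrow> bool" where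
  "orthonormal xs \<longleftrightarrow>
     (\<forall>i<length xs. \<forall>j<length xs. xs ! i \<bullet>c xs ! j = (if i = j then 1 else 0))"

lemma orthonormal_singleton: "orthonormal [x] \<longleftrightarrow> x \<bullet>c x = 1"
  unfolding orthonormal_def by simp

lemma orthonormal_append:
  assumes xs: "set xs \<subseteq> carrier_vec n" "orthonormal xs"
    and ys: "set ys \<subseteq> carrier_vec n" "orthonormal ys"
    and orth: "\<forall>x\<in>set xs. \<forall>y\<in>set ys. x \<bullet>c y = 0"
  shows "orthonormal (xs @ ys)"
  unfolding orthonormal_def
proof (intro allI impI)
  fix i j assume i: "i < length (xs @ ys)" and j: "j < length (xs @ ys)"
  have orth': "y \<bullet>c x = 0" if "x \<in> set xs" "y \<in> set ys" for x y
    using cscalar_prod_swap[of y n x] orth that xs ys by auto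
  show "(xs @ ys) ! i \<bullet>c (xs @ ys) ! j = (if i = j then 1 else 0)"
  proof (cases "i < length xs"; cases "j < length xs")
    assume "i < length xs" "j < length xs"
    then show ?thesis using xs(2) by (simp add: orthonormal_def nth_append)
  next
    assume "i < length xs" "\<not> j < length xs"
    then show ?thesis using orth j by (simp add: nth_append)
  next
    assume "\<not> i < length xs" "j < length xs"
    then show ?thesis using orth' i by (simp add: nth_append)
  next
    assume "\<not> i < length xs" "\<not> j < length xs"
    then show ?thesis using ys(2) i j by (auto simp: orthonormal_def nth_append)
  qed
qed

lemma orthonormal_map_isometry:
  assumes M: "M \<in> carrier_mat a b" "adj M * M = 1\<^sub>m b"
    and xs: "set xs \<subseteq> carrier_vec b" "orthonormal xs"
  shows "orthonormal (map (\<lambda>x. M *\<^sub>v x) xs)"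
proof -
  have "xs ! i \<in> carrier_vec b" if "i < length xs" for i
    using xs(1) that by auto
  then show ?thesis
    using xs(2) isometry_cscalar_prod[OF M] unfolding orthonormal_def by auto
qed

lemma adj_mat_of_cols_mult_vec:
  assumes "set xs \<subseteq> carrier_vec n" "z \<in> carrier_vec n"
  shows "adj (mat_of_cols n xs) *\<^sub>v z = vec (length xs) (\<lambda>t. z \<bullet>c xs ! t)"
proof (rule eq_vecI)
  fix t assume "t < dim_vec (vec (length xs) (\<lambda>t. z \<bullet>c xs ! t))"
  then have "xs ! t \<in> carrier_vec n" using assms(1) by auto
  then show "(adj (mat_of_cols n xs) *\<^sub>v z) $ t = vec (length xs) (\<lambda>t. z \<bullet>c xs ! t) $ t"
    using assms \<open>t < _\<close>
    by (auto simp: scalar_prod_def mat_of_cols_def mult.commute intro!: sum.cong)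
qed auto

lemma adj_mat_of_cols_orthonormal:
  assumes "set xs \<subseteq> carrier_vec n" "orthonormal xs"
  shows "adj (mat_of_cols n xs) * mat_of_cols n xs = 1\<^sub>m (length xs)"
proof (rule eq_matI)
  fix i j assume "i < dim_row (1\<^sub>m (length xs))" "j < dim_col (1\<^sub>m (length xs))"
  moreover have "xs ! i \<in> carrier_vec n" "xs ! j \<in> carrier_vec n"
    using assms(1) \<open>i < _\<close> \<open>j < _\<close> by auto
  ultimately have "(adj (mat_of_cols n xs) * mat_of_cols n xs) $$ (i, j) = xs ! j \<bullet>c xs ! i"
    by (auto simp: scalar_prod_def mat_of_cols_def mult.commute intro!: sum.cong)
  then show "(adj (mat_of_cols n xs) * mat_of_cols n xs) $$ (i, j) = 1\<^sub>m (length xs) $$ (i, j)"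
    using assms \<open>i < _\<close> \<open>j < _\<close> by (auto simp: orthonormal_def)
qed auto

lemma cscalar_prod_diff_self:
  fixes x y :: "complex vec"
  assumes "x \<in> carrier_vec n" "y \<in> carrier_vec n"
  shows "(x - y) \<bullet>c (x - y) = x \<bullet>c x - x \<bullet>c y - y \<bullet>c x + y \<bullet>c y"
  using assms unfolding scalar_prod_def
  by (simp add: algebra_simps sum_subtractf sum.distrib conjugate_complex_def)

lemma bessel_inequality:
  assumes xs: "set xs \<subseteq> carrier_vec n" "orthonormal xs" and z: "z \<in> carrier_vec n"
  shows "(\<Sum>t<length xs. (cmod (z \<bullet>c xs ! t))\<^sup>2) \<le> sq_norm z"
proof -
  define X where "X = mat_of_cols n xs"
  define a where "a = adj X *\<^sub>v z"
  have X: "X \<in> carrier_mat n (length xs)" and XX: "adj X * X = 1\<^sub>m (length xs)"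
    unfolding X_def using adj_mat_of_cols_orthonormal[OF xs] by auto
  have a: "a \<in> carrier_vec (length xs)"
    unfolding a_def using mult_mat_vec_carrier[OF adj_carrier[OF X] z] .
  have Xa: "X *\<^sub>v a \<in> carrier_vec n" using X a by simp
  have Xa_z: "(X *\<^sub>v a) \<bullet>c z = a \<bullet>c a"
    unfolding a_def using cscalar_prod_adj[OF X _ z] a a_def by simp
  then have z_Xa: "z \<bullet>c (X *\<^sub>v a) = a \<bullet>c a"
    using cscalar_prod_swap[OF z Xa] by (simp add: cscalar_prod_self)
  have Xa_Xa: "(X *\<^sub>v a) \<bullet>c (X *\<^sub>v a) = a \<bullet>c a"
    by (rule isometry_cscalar_prod[OF X XX a a])
  have "(z - X *\<^sub>v a) \<bullet>c (z - X *\<^sub>v a) = z \<bullet>c z - a \<bullet>c a"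
    unfolding cscalar_prod_diff_self[OF z Xa] Xa_z z_Xa Xa_Xa by simp
  then have "sq_norm (z - X *\<^sub>v a) = sq_norm z - sq_norm a"
    by (simp add: cscalar_prod_self flip: of_real_diff)
  moreover have "sq_norm a = (\<Sum>t<length xs. (cmod (z \<bullet>c xs ! t))\<^sup>2)"
    unfolding sq_norm_def a_def X_def adj_mat_of_cols_mult_vec[OF xs(1) z] by simp
  ultimately show ?thesis
    using sq_norm_nonneg[of "z - X *\<^sub>v a"] by simp
qed

lemma exists_unit_vec_orthogonal:
  fixes cs :: "complex vec list"
  assumes cs: "set cs \<subseteq> carrier_vec q" and len: "length cs < q"
  shows "\<exists>a \<in> carrier_vec q. a \<bullet>c a = 1 \<and> (\<forall>c\<in>set cs. a \<bullet>c c = 0)"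
proof -
  define f where "f i = (if i < length cs then conjugate (cs ! i) else 0\<^sub>v q)" for i
  define M where "M = mat\<^sub>r q q (\<lambda>i. if i = q - 1 then 0\<^sub>v q else f i)"
  have M: "M \<in> carrier_mat q q" unfolding M_def by simp
  have cs_nth: "cs ! i \<in> carrier_vec q" if "i < length cs" for i
    using cs that by auto
  then have "det M = 0"
    unfolding M_def using len by (intro det_row_0) (auto simp: f_def)
  then obtain b where b: "b \<in> carrier_vec q" "b \<noteq> 0\<^sub>v q" "M *\<^sub>v b = 0\<^sub>v q"
    using det_0_iff_vec_prod_zero[OF M] by blast
  have orth: "b \<bullet>c c = 0" if c: "c \<in> set cs" for c
  proof -
    obtain i where i: "i < length cs" "c = cs ! i" using c by (auto simp: in_set_conv_nth)
    have "i < q" "i \<noteq> q - 1" using i len by auto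
    then have "row M i = conjugate c" unfolding M_def f_def using i cs_nth by simp
    then have "conjugate c \<bullet> b = (M *\<^sub>v b) $ i" using \<open>i < q\<close> M by simp
    then show ?thesis
      using b c cs \<open>i < q\<close> comm_scalar_prod[of b q "conjugate c"] by auto
  qed
  define a where "a = complex_of_real (1 / sqrt (sq_norm b)) \<cdot>\<^sub>v b"
  have "a \<bullet>c a = 1"
    unfolding a_def using b sq_norm_eq_0_iff by (intro cscalar_prod_normalize) auto
  moreover have "a \<bullet>c c = 0" if "c \<in> set cs" for c
    unfolding a_def using orth[OF that] b(1) cs that by auto
  moreover have "a \<in> carrier_vec q" unfolding a_def using b by simp
  ultimately show ?thesis by blast
qed

lemma exists_orthonormal_orthogonal:
  fixes cs :: "complex vec list"
  assumes cs: "set cs \<subseteq> carrier_vec q" and len: "length cs + k \<le> q"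
  shows "\<exists>as. length as = k \<and> set as \<subseteq> carrier_vec q \<and> orthonormal as
    \<and> (\<forall>a\<in>set as. \<forall>c\<in>set cs. a \<bullet>c c = 0)"
  using len
proof (induction k)
  case 0
  show ?case by (auto simp: orthonormal_def)
next
  case (Suc k)
  then obtain as where as: "length as = k" "set as \<subseteq> carrier_vec q" "orthonormal as"
    "\<forall>a\<in>set as. \<forall>c\<in>set cs. a \<bullet>c c = 0" by auto
  have "set (cs @ as) \<subseteq> carrier_vec q" "length (cs @ as) < q"
    using cs as Suc.prems by auto
  from exists_unit_vec_orthogonal[OF this] obtain a where a: "a \<in> carrier_vec q" "a \<bullet>c a = 1"
    "\<forall>c\<in>set (cs @ as). a \<bullet>c c = 0" by blast
  have "b \<bullet>c a = 0" if "b \<in> set as" for b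
    using cscalar_prod_swap[of b q a] a as that by auto
  then have "orthonormal (as @ [a])"
    using as a by (intro orthonormal_append[of _ q]) (auto simp: orthonormal_singleton)
  then show ?case
    using as a by (intro exI[of _ "as @ [a]"]) auto
qed

section \<open>Frame weights and diagonal quadratic forms\<close>

(* frame_weight xs j is the j-th diagonal entry of the orthogonal projection onto span xs. *)
definition frame_weight :: "complex vec list \<Rightarrow> nat \<Rightarrow> real" where
  "frame_weight xs j = (\<Sum>t<length xs. (cmod (xs ! t $ j))\<^sup>2)"

lemma frame_weight_nonneg: "0 \<le> frame_weight xs j"
  unfolding frame_weight_def by (simp add: sum_nonneg)

lemma frame_weight_append_singleton:
  "frame_weight (xs @ [w]) j = frame_weight xs j + (cmod (w $ j))\<^sup>2"
  unfolding frame_weight_def by (simp add: nth_append)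

lemma frame_weight_le_1:
  assumes "set xs \<subseteq> carrier_vec n" "orthonormal xs" "j < n"
  shows "frame_weight xs j \<le> 1"
proof -
  have "cmod (unit_vec n j \<bullet>c xs ! t) = cmod (xs ! t $ j)" if "t < length xs" for t
    using nth_carrier_vec[OF assms(1) that] assms(3) by simp
  moreover have "sq_norm (unit_vec n j) = 1"
    using \<open>j < n\<close> cscalar_prod_self[of "unit_vec n j"] by simp
  ultimately show ?thesis
    using bessel_inequality[OF assms(1,2) unit_vec_carrier[of n j]] by (simp add: frame_weight_def)
qed

lemma sum_frame_weight:
  assumes "set xs \<subseteq> carrier_vec n" "orthonormal xs"
  shows "(\<Sum>j<n. frame_weight xs j) = real (length xs)"
proof -
  have "sq_norm (xs ! t) = 1" if "t < length xs" for t
    using assms that cscalar_prod_self[of "xs ! t"] by (simp add: orthonormal_def)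
  moreover have "dim_vec (xs ! t) = n" if "t < length xs" for t
    using nth_carrier_vec[OF assms(1) that] by simp
  ultimately show ?thesis
    unfolding frame_weight_def by (subst sum.swap) (simp add: sq_norm_def)
qed

(* Bessel's inequality for xs extended by the normalised restriction of b to the coordinates
   outside I. *)
lemma frame_weight_add_overlap_le_1:
  assumes xs: "set xs \<subseteq> carrier_vec n" "orthonormal xs"
    and b: "b \<in> carrier_vec n" and orth: "\<forall>x\<in>set xs. x \<bullet>c b = 0"
    and vanish: "\<forall>x\<in>set xs. \<forall>i\<in>I. x $ i = 0"
    and S: "S = (\<Sum>i\<in>{..<n} - I. (cmod (b $ i))\<^sup>2)" "S \<noteq> 0"
    and i: "i < n" "i \<notin> I"
  shows "frame_weight xs i + (cmod (b $ i))\<^sup>2 / S \<le> 1"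
proof -
  define b' where "b' = vec n (\<lambda>i. if i \<in> I then 0 else b $ i)"
  define c where "c = complex_of_real (1 / sqrt S)"
  have b': "b' \<in> carrier_vec n" unfolding b'_def by simp
  have "sq_norm b' = (\<Sum>i<n. if i \<in> I then 0 else (cmod (b $ i))\<^sup>2)"
    unfolding sq_norm_def b'_def by (auto intro!: sum.cong)
  also have "\<dots> = S"
    unfolding S by (simp add: sum.If_cases Diff_eq)
  finally have nb': "sq_norm b' = S" .
  have S_pos: "0 < S"
    using S sq_norm_nonneg[of b'] nb' by simp
  have w: "c \<cdot>\<^sub>v b' \<in> carrier_vec n" "(c \<cdot>\<^sub>v b') \<bullet>c (c \<cdot>\<^sub>v b') = 1"
    using cscalar_prod_normalize[OF b'] b' nb' S unfolding c_def by auto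
  have "x \<bullet>c (c \<cdot>\<^sub>v b') = 0" if x: "x \<in> set xs" for x
  proof -
    have "x \<bullet>c b' = x \<bullet>c b"
      using x xs(1) vanish b unfolding b'_def by (auto simp: scalar_prod_def intro!: sum.cong)
    then show ?thesis
      using x xs(1) orth b' by (auto simp: conjugate_smult_vec)
  qed
  then have "orthonormal (xs @ [c \<cdot>\<^sub>v b'])"
    using xs w by (intro orthonormal_append[of _ n]) (auto simp: orthonormal_singleton)
  then have "frame_weight (xs @ [c \<cdot>\<^sub>v b']) i \<le> 1"
    using xs w i by (intro frame_weight_le_1[of _ n]) auto
  moreover have "(cmod ((c \<cdot>\<^sub>v b') $ i))\<^sup>2 = (cmod (b $ i))\<^sup>2 / S"
    using i S_pos unfolding c_def b'_def
    by (simp add: norm_divide power_divide)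
  ultimately show ?thesis
    by (simp add: frame_weight_append_singleton)
qed

lemma cscalar_prod_mat_diag:
  assumes "a \<in> carrier_vec m"
  shows "(mat_diag m d *\<^sub>v a) \<bullet>c a = (\<Sum>j<m. d j * complex_of_real ((cmod (a $ j))\<^sup>2))"
proof -
  have "mat_diag m d *\<^sub>v a = vec m (\<lambda>j. d j * a $ j)"
  proof (rule eq_vecI)
    fix j assume "j < dim_vec (vec m (\<lambda>j. d j * a $ j))"
    then show "(mat_diag m d *\<^sub>v a) $ j = vec m (\<lambda>j. d j * a $ j) $ j"
      using assms by (auto simp: mat_diag_def scalar_prod_def) (subst sum.remove[of _ j]; auto)
  qed (use assms in \<open>auto simp: mat_diag_def\<close>)
  then show ?thesis
    using assms
    by (auto simp: scalar_prod_def lessThan_atLeast0 complex_norm_square mult.assoc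
        simp del: of_real_power intro!: sum.cong)
qed

lemma quadratic_form_diagonalized:
  assumes A: "A \<in> carrier_mat n n" and Y: "Y \<in> carrier_mat n m"
    and diag: "adj Y * A * Y = mat_diag m d" and a: "a \<in> carrier_vec m"
  shows "(A *\<^sub>v (Y *\<^sub>v a)) \<bullet>c (Y *\<^sub>v a) = (\<Sum>j<m. d j * complex_of_real ((cmod (a $ j))\<^sup>2))"
proof -
  have "(A *\<^sub>v (Y *\<^sub>v a)) \<bullet>c (Y *\<^sub>v a) = (adj Y *\<^sub>v (A *\<^sub>v (Y *\<^sub>v a))) \<bullet>c a"
    using cscalar_prod_adj[of "adj Y" m n "A *\<^sub>v (Y *\<^sub>v a)" a] A Y a by simp
  also have "adj Y *\<^sub>v (A *\<^sub>v (Y *\<^sub>v a)) = (adj Y * A * Y) *\<^sub>v a"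
  proof -
    have "adj Y \<in> carrier_mat m n" "adj Y * A \<in> carrier_mat m n" "Y *\<^sub>v a \<in> carrier_vec n"
      using A Y a by auto
    then show ?thesis
      using assoc_mult_mat_vec[of "adj Y * A" m n Y m a] assoc_mult_mat_vec[of "adj Y" m n A n] A Y a
      by simp
  qed
  finally show ?thesis
    using diag cscalar_prod_mat_diag[OF a] by simp
qed

section \<open>Unitary diagonalization of Hermitian matrices\<close>

lemma hermitian_sandwich:
  assumes A: "A \<in> carrier_mat n n" "adj A = A" and U: "U \<in> carrier_mat n m"
  shows "adj (adj U * A * U) = adj U * A * U"
proof -
  have UA: "adj U * A \<in> carrier_mat m n"
    using A U by auto
  have "adj (adj U * A * U) = adj U * adj (adj U * A)"
    using adj_mult[OF UA U] by simp
  also have "adj (adj U * A) = A * U"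
    using adj_mult[OF adj_carrier[OF U] A(1)] A(2) by simp
  finally show ?thesis
    using assoc_mult_mat[OF adj_carrier[OF U] A(1) U] by simp
qed

lemma adj_mult_sandwich:
  assumes B: "B \<in> carrier_mat n n" and W: "W \<in> carrier_mat n k" and F: "F \<in> carrier_mat k m"
  shows "adj (W * F) * B * (W * F) = adj F * (adj W * B * W) * F"
proof -
  have c: "adj F \<in> carrier_mat m k" "adj W \<in> carrier_mat k n" "adj W * B \<in> carrier_mat k n"
    "W * F \<in> carrier_mat n m" "adj W * B * W \<in> carrier_mat k k"
    using B W F by auto
  have "adj (W * F) * B * (W * F) = adj F * (adj W * B) * (W * F)"
    unfolding adj_mult[OF W F] using assoc_mult_mat[OF c(1) c(2) B] by simp
  also have "\<dots> = adj F * ((adj W * B) * (W * F))"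
    by (rule assoc_mult_mat[OF c(1) c(3) c(4)])
  also have "(adj W * B) * (W * F) = (adj W * B * W) * F"
    by (rule assoc_mult_mat[OF c(3) W F, symmetric])
  also have "adj F * ((adj W * B * W) * F) = adj F * (adj W * B * W) * F"
    by (rule assoc_mult_mat[OF c(1) c(5) F, symmetric])
  finally show ?thesis .
qed

lemma isometry_mult:
  assumes W: "W \<in> carrier_mat n k" and F: "F \<in> carrier_mat k m"
    and "adj W * W = 1\<^sub>m k" "adj F * F = 1\<^sub>m m"
  shows "adj (W * F) * (W * F) = 1\<^sub>m m"
  using adj_mult_sandwich[OF one_carrier_mat W F] assms by simp

lemma exists_unit_eigenvector:
  fixes B :: "complex mat"
  assumes B: "B \<in> carrier_mat m m" and root: "poly (char_poly B) e = 0"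
  obtains v where "v \<in> carrier_vec m" "v \<bullet>c v = 1" "B *\<^sub>v v = e \<cdot>\<^sub>v v"
proof -
  obtain w where "eigenvector B w e"
    using eigenvalue_root_char_poly[OF B] root unfolding eigenvalue_def by auto
  then have w: "w \<in> carrier_vec m" "w \<noteq> 0\<^sub>v m" "B *\<^sub>v w = e \<cdot>\<^sub>v w"
    using B unfolding eigenvector_def by auto
  define c where "c = complex_of_real (1 / sqrt (sq_norm w))"
  have "(c \<cdot>\<^sub>v w) \<bullet>c (c \<cdot>\<^sub>v w) = 1"
    unfolding c_def using w sq_norm_eq_0_iff by (intro cscalar_prod_normalize) auto
  moreover have "B *\<^sub>v (c \<cdot>\<^sub>v w) = e \<cdot>\<^sub>v (c \<cdot>\<^sub>v w)"
    using w B by (simp add: mult_mat_vec smult_smult_assoc mult.commute)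
  ultimately show thesis
    using that[of "c \<cdot>\<^sub>v w"] w by simp
qed

lemma exists_unitary_first_col:
  assumes v: "v \<in> carrier_vec (Suc m)" "v \<bullet>c v = 1"
  obtains W where "W \<in> carrier_mat (Suc m) (Suc m)" "adj W * W = 1\<^sub>m (Suc m)" "col W 0 = v"
proof -
  obtain as where as: "length as = m" "set as \<subseteq> carrier_vec (Suc m)" "orthonormal as"
    "\<forall>a\<in>set as. a \<bullet>c v = 0"
    using exists_orthonormal_orthogonal[of "[v]" "Suc m" m] v by auto
  have "v \<bullet>c a = 0" if "a \<in> set as" for a
    using cscalar_prod_swap[of v "Suc m" a] v as that by auto
  then have "orthonormal ([v] @ as)"
    using v as by (intro orthonormal_append[of _ "Suc m"]) (auto simp: orthonormal_singleton)
  then have "adj (mat_of_cols (Suc m) (v # as)) * mat_of_cols (Suc m) (v # as) = 1\<^sub>m (Suc m)"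
    using adj_mat_of_cols_orthonormal[of "v # as" "Suc m"] v as by simp
  moreover have "col (mat_of_cols (Suc m) (v # as)) 0 = v"
    using v by simp
  ultimately show thesis
    using that[of "mat_of_cols (Suc m) (v # as)"] mat_of_cols_carrier(1)[of "Suc m" "v # as"] as
    by simp
qed

lemma col_0_unitary_conj:
  assumes B: "B \<in> carrier_mat n n"
    and W: "W \<in> carrier_mat n n" "adj W * W = 1\<^sub>m n"
    and eig: "B *\<^sub>v col W 0 = e \<cdot>\<^sub>v col W 0" and n: "0 < n"
  shows "col (adj W * B * W) 0 = e \<cdot>\<^sub>v unit_vec n 0"
proof -
  have WB: "adj W * B \<in> carrier_mat n n"
    using B W by auto
  have W0: "col W 0 \<in> carrier_vec n"
    using col_carrier_vec[OF n W(1)] .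
  have "col (adj W * B * W) 0 = adj W *\<^sub>v (B *\<^sub>v col W 0)"
    using col_mult2[OF WB W(1) n] assoc_mult_mat_vec[OF adj_carrier[OF W(1)] B W0] by simp
  also have "\<dots> = e \<cdot>\<^sub>v col (adj W * W) 0"
    using eig W0 col_mult2[OF adj_carrier[OF W(1)] W(1) n]
    by (simp add: mult_mat_vec[OF adj_carrier[OF W(1)] W0])
  finally show ?thesis
    using W(2) n by simp
qed

lemma hermitian_deflation:
  assumes B: "B \<in> carrier_mat (Suc m) (Suc m)" "adj B = B"
    and W: "W \<in> carrier_mat (Suc m) (Suc m)" "adj W * W = 1\<^sub>m (Suc m)"
    and eig: "B *\<^sub>v col W 0 = e \<cdot>\<^sub>v col W 0"
  obtains B' where "B' \<in> carrier_mat m m" "adj B' = B'"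
    "adj W * B * W = four_block_mat (mat 1 1 (\<lambda>_. e)) (0\<^sub>m 1 m) (0\<^sub>m m 1) B'"
proof -
  define C where "C = adj W * B * W"
  have C: "C \<in> carrier_mat (Suc m) (Suc m)"
    unfolding C_def using B W by auto
  have C_herm: "adj C = C"
    unfolding C_def by (rule hermitian_sandwich[OF B W(1)])
  have colC: "col C 0 = e \<cdot>\<^sub>v unit_vec (Suc m) 0"
    unfolding C_def by (rule col_0_unitary_conj[OF B(1) W eig]) simp
  have col0: "C $$ (i, 0) = (if i = 0 then e else 0)" if "i < Suc m" for i
  proof -
    have "C $$ (i, 0) = col C 0 $ i" using C that by simp
    then show ?thesis using colC that by simp
  qed
  define B' where "B' = mat m m (\<lambda>(i, j). C $$ (Suc i, Suc j))"
  have "adj B' = B'"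
  proof (rule eq_matI)
    fix i j assume "i < dim_row B'" "j < dim_col B'"
    then show "adj B' $$ (i, j) = B' $$ (i, j)"
      using C arg_cong[OF C_herm, of "\<lambda>M. M $$ (Suc i, Suc j)"] unfolding B'_def by simp
  qed (auto simp: B'_def)
  moreover have "C = four_block_mat (mat 1 1 (\<lambda>_. e)) (0\<^sub>m 1 m) (0\<^sub>m m 1) B'"
  proof (rule eq_matI)
    fix i j assume ij: "i < dim_row (four_block_mat (mat 1 1 (\<lambda>_. e)) (0\<^sub>m 1 m) (0\<^sub>m m 1) B')"
      "j < dim_col (four_block_mat (mat 1 1 (\<lambda>_. e)) (0\<^sub>m 1 m) (0\<^sub>m m 1) B')"
    have row0: "C $$ (0, j) = 0" if "0 < j" "j < Suc m" for j
      using C col0[OF that(2)] that arg_cong[OF C_herm, of "\<lambda>M. M $$ (0, j)"] by simp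
    show "C $$ (i, j) = four_block_mat (mat 1 1 (\<lambda>_. e)) (0\<^sub>m 1 m) (0\<^sub>m m 1) B' $$ (i, j)"
      using ij col0 row0 by (cases i; cases j) (auto simp: B'_def)
  qed (use C in \<open>auto simp: B'_def\<close>)
  ultimately show thesis
    using that[of B'] unfolding C_def by (simp add: B'_def)
qed

lemma unitary_similar_mat:
  assumes "B \<in> carrier_mat n n" "W \<in> carrier_mat n n" "adj W * W = 1\<^sub>m n"
  shows "similar_mat (adj W * B * W) B"
  unfolding similar_mat_def similar_mat_wit_def Let_def
  using assms unitary_mult_adj[OF assms(2,3)] by (intro exI[of _ "adj W"] exI[of _ W]) auto

lemma char_poly_deflation:
  assumes B: "B \<in> carrier_mat (Suc m) (Suc m)"
    and W: "W \<in> carrier_mat (Suc m) (Suc m)" "adj W * W = 1\<^sub>m (Suc m)"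
    and B': "B' \<in> carrier_mat m m"
    and block: "adj W * B * W = four_block_mat (mat 1 1 (\<lambda>_. e)) (0\<^sub>m 1 m) (0\<^sub>m m 1) B'"
  shows "char_poly B = [:- e, 1:] * char_poly B'"
proof -
  have "char_poly B = char_poly (adj W * B * W)"
    using char_poly_similar[OF unitary_similar_mat[OF B W]] by simp
  also have "\<dots> = char_poly (mat 1 1 (\<lambda>_. e)) * char_poly B'"
    unfolding block by (rule char_poly_four_block_zeros_col) (use B' in auto)
  also have "char_poly (mat 1 1 (\<lambda>_. e)) = [:- e, 1:]"
    by (simp add: char_poly_defs det_def sign_def)
  finally show ?thesis .
qed

lemma one_block_sandwich:
  assumes Z: "Z \<in> carrier_mat m m"
  defines "F \<equiv> four_block_mat (1\<^sub>m 1) (0\<^sub>m 1 m) (0\<^sub>m m 1) Z"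
  shows "F \<in> carrier_mat (Suc m) (Suc m)"
    and "B \<in> carrier_mat m m \<Longrightarrow> adj F * four_block_mat (mat 1 1 (\<lambda>_. e)) (0\<^sub>m 1 m) (0\<^sub>m m 1) B * F
      = four_block_mat (mat 1 1 (\<lambda>_. e)) (0\<^sub>m 1 m) (0\<^sub>m m 1) (adj Z * B * Z)"
proof -
  show "F \<in> carrier_mat (Suc m) (Suc m)"
    unfolding F_def using Z by auto
  assume B: "B \<in> carrier_mat m m"
  have "adj F = four_block_mat (1\<^sub>m 1) (0\<^sub>m 1 m) (0\<^sub>m m 1) (adj Z)"
    unfolding F_def using adj_four_block_mat[OF one_carrier_mat zero_carrier_mat zero_carrier_mat Z]
    by simp
  moreover have "adj Z * B \<in> carrier_mat m m"
    using Z B by auto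
  ultimately show "adj F * four_block_mat (mat 1 1 (\<lambda>_. e)) (0\<^sub>m 1 m) (0\<^sub>m m 1) B * F
      = four_block_mat (mat 1 1 (\<lambda>_. e)) (0\<^sub>m 1 m) (0\<^sub>m m 1) (adj Z * B * Z)"
    unfolding F_def using Z B by (simp add: mult_four_block_mat[of _ 1 1 _ m _ m _ _ 1 _ m])
qed

(* The Schur decomposition of Jordan_Normal_Form is only a similarity, not a unitary one,
   so the spectral theorem is proved here by deflation. *)
theorem hermitian_unitarily_diagonalizable:
  fixes B :: "complex mat"
  assumes "B \<in> carrier_mat m m" "adj B = B" "char_poly B = (\<Prod>j<m. [:- e j, 1:])"
  shows "\<exists>Z \<in> carrier_mat m m. adj Z * Z = 1\<^sub>m m \<and> adj Z * B * Z = mat_diag m e"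
  using assms
proof (induction m arbitrary: B e)
  case 0
  then have "adj (1\<^sub>m 0) * 1\<^sub>m 0 = 1\<^sub>m 0" "adj (1\<^sub>m 0) * B * 1\<^sub>m 0 = mat_diag 0 e"
    by (auto intro!: eq_matI simp: mat_diag_def)
  then show ?case using one_carrier_mat by blast
next
  case (Suc m)
  have B: "B \<in> carrier_mat (Suc m) (Suc m)" "adj B = B"
    using Suc.prems by auto
  have cp: "char_poly B = [:- e 0, 1:] * (\<Prod>j<m. [:- e (Suc j), 1:])"
    using Suc.prems(3) by (simp only: prod.lessThan_Suc_shift)
  obtain v where v: "v \<in> carrier_vec (Suc m)" "v \<bullet>c v = 1" "B *\<^sub>v v = e 0 \<cdot>\<^sub>v v"
    using exists_unit_eigenvector[OF B(1)] cp by auto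
  obtain W where W: "W \<in> carrier_mat (Suc m) (Suc m)" "adj W * W = 1\<^sub>m (Suc m)" "col W 0 = v"
    using exists_unitary_first_col[OF v(1,2)] by blast
  obtain B' where B': "B' \<in> carrier_mat m m" "adj B' = B'"
    and block: "adj W * B * W = four_block_mat (mat 1 1 (\<lambda>_. e 0)) (0\<^sub>m 1 m) (0\<^sub>m m 1) B'"
    using hermitian_deflation[OF B W(1,2)] v(3) W(3) by metis
  have "[:- e 0, 1:] * char_poly B' = [:- e 0, 1:] * (\<Prod>j<m. [:- e (Suc j), 1:])"
    using char_poly_deflation[OF B(1) W(1,2) B'(1) block] cp by simp
  then have "char_poly B' = (\<Prod>j<m. [:- e (Suc j), 1:])"
    by (rule mult_left_cancel[THEN iffD1, rotated]) simp
  from Suc.IH[OF B'(1,2) this] obtain Z' where Z': "Z' \<in> carrier_mat m m" "adj Z' * Z' = 1\<^sub>m m"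
    "adj Z' * B' * Z' = mat_diag m (\<lambda>j. e (Suc j))"
    by blast
  define F where "F = four_block_mat (1\<^sub>m 1) (0\<^sub>m 1 m) (0\<^sub>m m 1) Z'"
  note F = one_block_sandwich[OF Z'(1), folded F_def]
  have one: "four_block_mat (mat 1 1 (\<lambda>_. 1)) (0\<^sub>m 1 m) (0\<^sub>m m 1) (1\<^sub>m m) = 1\<^sub>m (Suc m)"
    by (auto intro!: eq_matI)
  have "adj F * F = adj F * four_block_mat (mat 1 1 (\<lambda>_. 1)) (0\<^sub>m 1 m) (0\<^sub>m m 1) (1\<^sub>m m) * F"
    unfolding one using F(1) by simp
  also have "\<dots> = 1\<^sub>m (Suc m)"
    unfolding F(2)[OF one_carrier_mat] using Z' one by simp
  finally have "adj F * F = 1\<^sub>m (Suc m)" .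
  moreover have "adj F * (adj W * B * W) * F = mat_diag (Suc m) e"
    unfolding block F(2)[OF B'(1)] using Z'(3) by (auto intro!: eq_matI simp: mat_diag_def)
  ultimately show ?case
    using W F(1) adj_mult_sandwich[OF B(1) W(1) F(1)] isometry_mult[OF W(1) F(1) W(2)]
    by (intro bexI[of _ "W * F"]) auto
qed

lemma unitary_eigenbasis:
  assumes A: "A \<in> carrier_mat n n"
    and w: "\<And>i. i < n \<Longrightarrow> w i \<in> carrier_vec n"
    and eig: "\<And>i. i < n \<Longrightarrow> A *\<^sub>v w i = d i \<cdot>\<^sub>v w i"
    and on: "orthonormal (map w [0..<n])"
  defines "V \<equiv> mat_of_cols n (map w [0..<n])"
  shows "V \<in> carrier_mat n n" "adj V * V = 1\<^sub>m n" "adj V * A * V = mat_diag n d"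
    and "\<And>i. i < n \<Longrightarrow> col V i = w i"
proof -
  have ws: "set (map w [0..<n]) \<subseteq> carrier_vec n"
    using w by auto
  show V: "V \<in> carrier_mat n n"
    unfolding V_def using mat_of_cols_carrier(1)[of n "map w [0..<n]"] by simp
  show VV: "adj V * V = 1\<^sub>m n"
    unfolding V_def using adj_mat_of_cols_orthonormal[OF ws on] by simp
  show col: "col V i = w i" if "i < n" for i
    unfolding V_def using that w[OF that] by simp
  have "A * V = V * mat_diag n d"
  proof (rule eq_matI)
    fix i j assume "i < dim_row (V * mat_diag n d)" "j < dim_col (V * mat_diag n d)"
    then have ij: "i < n" "j < n" using V by (auto simp: mat_diag_def)
    have "(A * V) $$ (i, j) = (A *\<^sub>v col V j) $ i"
      using A V ij by simp
    also have "\<dots> = V $$ (i, j) * d j"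
      using eig[OF ij(2)] col[OF ij(2)] w[OF ij(2)] index_col[of i V j] V ij by (simp add: mult.commute)
    finally show "(A * V) $$ (i, j) = (V * mat_diag n d) $$ (i, j)"
      using V ij by (simp add: mat_diag_mult_right)
  qed (use A V in \<open>auto simp: mat_diag_def\<close>)
  then have "adj V * A * V = (adj V * V) * mat_diag n d"
    using assoc_mult_mat[OF adj_carrier[OF V] A V] assoc_mult_mat[OF adj_carrier[OF V] V mat_diag_dim]
    by simp
  then show "adj V * A * V = mat_diag n d"
    using VV left_mult_one_mat[OF mat_diag_dim[of n d]] by simp
qed

lemma hermitian_compression_diagonalization:
  assumes A: "A \<in> carrier_mat n n" "hermitian_mat A"
    and U: "U \<in> carrier_mat n m" "adj U * U = 1\<^sub>m m"
    and cp: "char_poly (adj U * A * U) = (\<Prod>j<m. [:- e j, 1:])"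
    and u: "u \<in> carrier_vec n" "adj U *\<^sub>v u = 0\<^sub>v m"
  obtains Y where "Y \<in> carrier_mat n m" "adj Y * Y = 1\<^sub>m m" "adj Y * A * Y = mat_diag m e"
    "adj Y *\<^sub>v u = 0\<^sub>v m"
proof -
  have B: "adj U * A * U \<in> carrier_mat m m" "adj (adj U * A * U) = adj U * A * U"
    using A U hermitian_sandwich[OF A(1) _ U(1)] by (auto simp: hermitian_mat_def)
  obtain Z where Z: "Z \<in> carrier_mat m m" "adj Z * Z = 1\<^sub>m m" "adj Z * (adj U * A * U) * Z = mat_diag m e"
    using hermitian_unitarily_diagonalizable[OF B cp] by blast
  have "adj (U * Z) *\<^sub>v u = adj Z *\<^sub>v (adj U *\<^sub>v u)"
    using adj_mult[OF U(1) Z(1)] assoc_mult_mat_vec[OF adj_carrier[OF Z(1)] adj_carrier[OF U(1)] u(1)]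
    by simp
  also have "\<dots> = 0\<^sub>v m"
    using u(2) Z(1) by (auto simp: scalar_prod_def)
  finally show thesis
    using that[of "U * Z"] U Z isometry_mult[OF U(1) Z(1) U(2) Z(2)] adj_mult_sandwich[OF A(1) U(1) Z(1)]
    by auto
qed

section \<open>Partial sums of eigenvalues of a compression\<close>

lemma bathtub_upper:
  fixes f w h :: "'a \<Rightarrow> real"
  assumes D: "finite D" and TD: "T \<subseteq> D" and w_nonneg: "\<And>i. i \<in> D \<Longrightarrow> 0 \<le> w i"
    and w_le: "\<And>i. i \<in> T \<Longrightarrow> w i \<le> h i" and w_sum: "sum w D = real (card T)"
    and f_T: "\<And>i. i \<in> T \<Longrightarrow> \<theta> \<le> f i" and f_D: "\<And>i. i \<in> D - T \<Longrightarrow> f i \<le> \<theta>"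
  shows "(\<Sum>i\<in>D. f i * w i) \<le> \<theta> * real (card T) + (\<Sum>i\<in>T. (f i - \<theta>) * h i)"
proof -
  have "(\<Sum>i\<in>D. f i * w i) = \<theta> * sum w D + (\<Sum>i\<in>D. (f i - \<theta>) * w i)"
    by (simp add: sum_distrib_left sum.distrib[symmetric] algebra_simps)
  also have "(\<Sum>i\<in>D. (f i - \<theta>) * w i)
      = (\<Sum>i\<in>T. (f i - \<theta>) * w i) + (\<Sum>i\<in>D - T. (f i - \<theta>) * w i)"
    using sum.subset_diff[OF TD D] by (simp add: add.commute)
  also have "(\<Sum>i\<in>T. (f i - \<theta>) * w i) \<le> (\<Sum>i\<in>T. (f i - \<theta>) * h i)"
    using TD by (intro sum_mono mult_left_mono) (auto simp: w_le f_T)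
  also have "(\<Sum>i\<in>D - T. (f i - \<theta>) * w i) \<le> 0"
    by (intro sum_nonpos mult_nonpos_nonneg) (auto simp: f_D w_nonneg)
  finally show ?thesis
    using w_sum by simp
qed

lemma bathtub_lower:
  fixes f w h :: "'a \<Rightarrow> real"
  assumes "finite D" "T \<subseteq> D" "\<And>i. i \<in> D \<Longrightarrow> 0 \<le> w i"
    and "\<And>i. i \<in> T \<Longrightarrow> w i \<le> h i" "sum w D = real (card T)"
    and "\<And>i. i \<in> T \<Longrightarrow> f i \<le> \<theta>" "\<And>i. i \<in> D - T \<Longrightarrow> \<theta> \<le> f i"
  shows "\<theta> * real (card T) - (\<Sum>i\<in>T. (\<theta> - f i) * h i) \<le> (\<Sum>i\<in>D. f i * w i)"
  using bathtub_upper[of D T w h "- \<theta>" "\<lambda>i. - f i"] assms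
  by (simp add: sum_negf algebra_simps)

(* The columns of V are orthonormal eigenvectors of A and the columns of Y are orthonormal
   eigenvectors of the compression, carried back into the hyperplane orthogonal to u; all indices
   are 0-based. *)
locale diagonalized_compression =
  fixes n m :: nat and A V Y :: "complex mat" and u :: "complex vec" and lam mu :: "nat \<Rightarrow> real"
  assumes A: "A \<in> carrier_mat n n"
    and V: "V \<in> carrier_mat n n" and V_unitary: "adj V * V = 1\<^sub>m n"
    and V_diag: "adj V * A * V = mat_diag n (\<lambda>i. complex_of_real (lam i))"
    and Y: "Y \<in> carrier_mat n m" and Y_isometry: "adj Y * Y = 1\<^sub>m m"
    and Y_diag: "adj Y * A * Y = mat_diag m (\<lambda>j. complex_of_real (mu j))"
    and u: "u \<in> carrier_vec n" and Y_perp: "adj Y *\<^sub>v u = 0\<^sub>v m"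
begin

abbreviation overlap :: "nat \<Rightarrow> real" where
  "overlap i \<equiv> (cmod (u \<bullet>c col V i))\<^sup>2"

lemma quadratic_form_in_both_eigenbases:
  assumes a: "a \<in> carrier_vec m"
  shows "(\<Sum>j<m. mu j * (cmod (a $ j))\<^sup>2) = (\<Sum>i<n. lam i * (cmod ((adj V *\<^sub>v (Y *\<^sub>v a)) $ i))\<^sup>2)"
proof -
  define x where "x = Y *\<^sub>v a"
  have x: "x \<in> carrier_vec n"
    unfolding x_def using Y a by simp
  have adjx: "adj V *\<^sub>v x \<in> carrier_vec n"
    using mult_mat_vec_carrier[OF adj_carrier[OF V] x] .
  have "V *\<^sub>v (adj V *\<^sub>v x) = x"
    using assoc_mult_mat_vec[OF V adj_carrier[OF V] x] unitary_mult_adj[OF V V_unitary] x by simp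
  then have "complex_of_real (\<Sum>j<m. mu j * (cmod (a $ j))\<^sup>2)
      = complex_of_real (\<Sum>i<n. lam i * (cmod ((adj V *\<^sub>v x) $ i))\<^sup>2)"
    using quadratic_form_diagonalized[OF A Y Y_diag a] quadratic_form_diagonalized[OF A V V_diag adjx]
    unfolding x_def by simp
  then show ?thesis unfolding x_def of_real_eq_iff .
qed

lemma frame_weights_in_both_eigenbases:
  assumes as: "set as \<subseteq> carrier_vec m" "orthonormal as"
  defines "bs \<equiv> map (\<lambda>a. adj V *\<^sub>v (Y *\<^sub>v a)) as"
  shows "set bs \<subseteq> carrier_vec n" "orthonormal bs"
    and "(\<Sum>j<m. mu j * frame_weight as j) = (\<Sum>i<n. lam i * frame_weight bs i)"
    and "\<forall>b\<in>set bs. b \<bullet>c (adj V *\<^sub>v u) = 0"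
proof -
  have adjV: "adj V \<in> carrier_mat n n" "adj (adj V) * adj V = 1\<^sub>m n"
    using V unitary_mult_adj[OF V V_unitary] by auto
  have bs: "bs = map (\<lambda>x. adj V *\<^sub>v x) (map (\<lambda>a. Y *\<^sub>v a) as)"
    unfolding bs_def by simp
  have xs: "set (map (\<lambda>a. Y *\<^sub>v a) as) \<subseteq> carrier_vec n"
    using as Y by auto
  show "set bs \<subseteq> carrier_vec n"
    unfolding bs using xs adjV by auto
  show "orthonormal bs"
    unfolding bs using xs orthonormal_map_isometry[OF Y Y_isometry as] orthonormal_map_isometry[OF adjV]
    by blast
  have "(\<Sum>j<m. mu j * frame_weight as j) = (\<Sum>t<length as. \<Sum>j<m. mu j * (cmod (as ! t $ j))\<^sup>2)"
    unfolding frame_weight_def by (simp add: sum_distrib_left sum.swap[of _ "{..<m}"])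
  also have "\<dots> = (\<Sum>t<length as. \<Sum>i<n. lam i * (cmod (bs ! t $ i))\<^sup>2)"
  proof (rule sum.cong[OF refl])
    fix t assume "t \<in> {..<length as}"
    then show "(\<Sum>j<m. mu j * (cmod (as ! t $ j))\<^sup>2) = (\<Sum>i<n. lam i * (cmod (bs ! t $ i))\<^sup>2)"
      using quadratic_form_in_both_eigenbases[OF nth_carrier_vec[OF as(1)]] by (simp add: bs_def)
  qed
  also have "\<dots> = (\<Sum>i<n. lam i * frame_weight bs i)"
    unfolding frame_weight_def bs_def by (simp add: sum_distrib_left sum.swap[of _ "{..<n}"])
  finally show "(\<Sum>j<m. mu j * frame_weight as j) = (\<Sum>i<n. lam i * frame_weight bs i)" .
  show "\<forall>b\<in>set bs. b \<bullet>c (adj V *\<^sub>v u) = 0"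
  proof
    fix b assume "b \<in> set bs"
    then obtain a where a: "a \<in> set as" "b = adj V *\<^sub>v (Y *\<^sub>v a)" unfolding bs_def by auto
    have "b \<bullet>c (adj V *\<^sub>v u) = (Y *\<^sub>v a) \<bullet>c u"
      unfolding a(2) using isometry_cscalar_prod[OF adjV, of "Y *\<^sub>v a" u] a as Y u by auto
    also have "\<dots> = a \<bullet>c (adj Y *\<^sub>v u)"
      using cscalar_prod_adj[OF Y _ u, of a] a as by auto
    finally show "b \<bullet>c (adj V *\<^sub>v u) = 0"
      using Y_perp a as by auto
  qed
qed

(* Geometrically, the vectors Y a with a in as form an orthonormal k-frame in span {Y e_j | j in J}
   that is orthogonal to every col V i with i in I. *)
lemma exists_test_frame:
  assumes I: "I \<subseteq> {..<n}" and J: "J \<subseteq> {..<m}" and card: "card I + k \<le> card J"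
  obtains as where "length as = k" "set as \<subseteq> carrier_vec m" "orthonormal as"
    "\<And>a j. a \<in> set as \<Longrightarrow> j < m \<Longrightarrow> j \<notin> J \<Longrightarrow> a $ j = 0"
    "\<And>b i. b \<in> set (map (\<lambda>a. adj V *\<^sub>v (Y *\<^sub>v a)) as) \<Longrightarrow> i \<in> I \<Longrightarrow> b $ i = 0"
proof -
  have finI: "finite I" and finJ: "finite J"
    using I J finite_subset by auto
  define cs where "cs = map (unit_vec m) (sorted_list_of_set ({..<m} - J))
    @ map (\<lambda>i. adj Y *\<^sub>v col V i) (sorted_list_of_set I)"
  have "adj Y *\<^sub>v col V i \<in> carrier_vec m" if "i \<in> I" for i
    using mult_mat_vec_carrier[OF adj_carrier[OF Y] col_carrier_vec[OF _ V]] I that by auto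
  then have "set cs \<subseteq> carrier_vec m"
    unfolding cs_def using finI by auto
  moreover have "length cs + k \<le> m"
    unfolding cs_def using card finI finJ J card_mono[OF _ J] by (simp add: card_Diff_subset)
  ultimately obtain as where as: "length as = k" "set as \<subseteq> carrier_vec m" "orthonormal as"
    "\<forall>a\<in>set as. \<forall>c\<in>set cs. a \<bullet>c c = 0"
    using exists_orthonormal_orthogonal by blast
  have as_J: "a $ j = 0" if "a \<in> set as" "j < m" "j \<notin> J" for a j
  proof -
    have "unit_vec m j \<in> set cs" unfolding cs_def using that by auto
    then have "a \<bullet>c unit_vec m j = 0" using as(4) that(1) by blast
    moreover have "a \<in> carrier_vec m" using as(2) that(1) by auto
    ultimately show ?thesis using that(2) by simp
  qed
  have bs_I: "b $ i = 0" if b: "b \<in> set (map (\<lambda>a. adj V *\<^sub>v (Y *\<^sub>v a)) as)" and i: "i \<in> I" for b i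
  proof -
    obtain a where a: "a \<in> set as" "b = adj V *\<^sub>v (Y *\<^sub>v a)" using b by auto
    have ai: "a \<in> carrier_vec m" "i < n" using a as(2) I i by auto
    then have "b $ i = (Y *\<^sub>v a) \<bullet>c col V i"
      using a(2) mult_adj_vec_index[OF V, of "Y *\<^sub>v a" i] Y by simp
    also have "\<dots> = a \<bullet>c (adj Y *\<^sub>v col V i)"
      by (rule cscalar_prod_adj[OF Y ai(1) col_carrier_vec[OF ai(2) V]])
    finally show ?thesis
      using as(4) a finI i unfolding cs_def by auto
  qed
  show thesis
    using that as(1-3) as_J bs_I by blast
qed

(* p and q are the frame weights of the test frame in the two eigenbases. *)
lemma exists_test_weights:
  assumes I: "I \<subseteq> {..<n}" and J: "J \<subseteq> {..<m}" and card: "card I + k \<le> card J"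
    and S: "(\<Sum>i\<in>{..<n} - I. overlap i) \<noteq> 0"
  obtains p q :: "nat \<Rightarrow> real" where
    "(\<Sum>j\<in>J. mu j * p j) = (\<Sum>i\<in>{..<n} - I. lam i * q i)"
    "\<And>j. j \<in> J \<Longrightarrow> 0 \<le> p j \<and> p j \<le> 1" "(\<Sum>j\<in>J. p j) = real k"
    "\<And>i. i \<in> {..<n} - I \<Longrightarrow> 0 \<le> q i \<and> q i \<le> 1 - overlap i / (\<Sum>i\<in>{..<n} - I. overlap i)"
    "(\<Sum>i\<in>{..<n} - I. q i) = real k"
proof -
  obtain as where as: "length as = k" "set as \<subseteq> carrier_vec m" "orthonormal as"
    and as_J: "\<And>a j. a \<in> set as \<Longrightarrow> j < m \<Longrightarrow> j \<notin> J \<Longrightarrow> a $ j = 0"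
    and bs_I: "\<And>b i. b \<in> set (map (\<lambda>a. adj V *\<^sub>v (Y *\<^sub>v a)) as) \<Longrightarrow> i \<in> I \<Longrightarrow> b $ i = 0"
    using exists_test_frame[OF I J card] by blast
  define bs where "bs = map (\<lambda>a. adj V *\<^sub>v (Y *\<^sub>v a)) as"
  note bs = frame_weights_in_both_eigenbases[OF as(2,3), folded bs_def]
  define p where "p = frame_weight as"
  define q where "q = frame_weight bs"
  have p_J: "p j = 0" if "j < m" "j \<notin> J" for j
    unfolding p_def frame_weight_def using that by (auto intro!: sum.neutral simp: as_J[OF nth_mem])
  have q_I: "q i = 0" if "i \<in> I" for i
    unfolding q_def frame_weight_def using that bs_I[folded bs_def, OF nth_mem]
    by (auto intro!: sum.neutral)
  have sum_J: "(\<Sum>j\<in>J. g j * p j) = (\<Sum>j<m. g j * p j)" for g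
    using J p_J by (intro sum.mono_neutral_left) auto
  have sum_I: "(\<Sum>i\<in>{..<n} - I. g i * q i) = (\<Sum>i<n. g i * q i)" for g
    using q_I by (intro sum.mono_neutral_left) auto
  show thesis
  proof
    show "(\<Sum>j\<in>J. mu j * p j) = (\<Sum>i\<in>{..<n} - I. lam i * q i)"
      using bs(3) sum_J[of mu] sum_I[of lam] unfolding p_def q_def by simp
    show "0 \<le> p j \<and> p j \<le> 1" if "j \<in> J" for j
      unfolding p_def using frame_weight_nonneg frame_weight_le_1[OF as(2,3)] that J by auto
    show "(\<Sum>j\<in>J. p j) = real k"
      using sum_J[of "\<lambda>_. 1"] sum_frame_weight[OF as(2,3)] as(1) unfolding p_def by simp
    show "(\<Sum>i\<in>{..<n} - I. q i) = real k"
      using sum_I[of "\<lambda>_. 1"] sum_frame_weight[OF bs(1,2)] as(1) unfolding q_def bs_def by simp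
    fix i assume i: "i \<in> {..<n} - I"
    have "(adj V *\<^sub>v u) $ j = u \<bullet>c col V j" if "j < n" for j
      using mult_adj_vec_index[OF V u that] .
    then have "frame_weight bs i + overlap i / (\<Sum>i\<in>{..<n} - I. overlap i) \<le> 1"
      using frame_weight_add_overlap_le_1[OF bs(1,2) mult_mat_vec_carrier[OF adj_carrier[OF V] u] bs(4),
          of I "\<Sum>i\<in>{..<n} - I. overlap i" i] bs_I[folded bs_def] S i by auto
    then show "0 \<le> q i \<and> q i \<le> 1 - overlap i / (\<Sum>i\<in>{..<n} - I. overlap i)"
      unfolding q_def using frame_weight_nonneg by simp
  qed
qed

lemma partial_sum_upper_bound:
  assumes lam_anti: "\<And>i j. i \<le> j \<Longrightarrow> j < n \<Longrightarrow> lam j \<le> lam i"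
    and mu_anti: "\<And>i j. i \<le> j \<Longrightarrow> j < m \<Longrightarrow> mu j \<le> mu i"
    and hyperplane: "n = Suc m" and ab: "a < b" "b \<le> m"
    and S: "(\<Sum>i\<in>{a..<n}. overlap i) \<noteq> 0"
  shows "(\<Sum>j\<in>{a..<b}. mu j) \<le> (\<Sum>i\<in>{a..<b}. lam i)
    - (\<Sum>i\<in>{a..<b}. overlap i / (\<Sum>i\<in>{a..<n}. overlap i) * (lam i - lam b))"
proof -
  define T where "T = {a..<b}"
  define S where "S = (\<Sum>i\<in>{a..<n}. overlap i)"
  have I: "{..<n} - {..<a} = {a..<n}" by auto
  obtain p q where pq: "(\<Sum>j<b. mu j * p j) = (\<Sum>i\<in>{a..<n}. lam i * q i)"
    "\<And>j. j < b \<Longrightarrow> 0 \<le> p j \<and> p j \<le> 1" "(\<Sum>j<b. p j) = real (card T)"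
    "\<And>i. i \<in> {a..<n} \<Longrightarrow> 0 \<le> q i \<and> q i \<le> 1 - overlap i / S" "(\<Sum>i\<in>{a..<n}. q i) = real (card T)"
    using exists_test_weights[of "{..<a}" "{..<b}" "b - a"] hyperplane ab S
    unfolding I S_def T_def by auto
  have "(\<Sum>j\<in>T. mu j) = mu a * real (card T) - (\<Sum>j\<in>T. (mu a - mu j) * 1)"
    by (simp add: sum_subtractf)
  also have "\<dots> \<le> (\<Sum>j<b. mu j * p j)"
    using pq(2,3) mu_anti ab by (intro bathtub_lower) (auto simp: T_def)
  also have "\<dots> \<le> lam b * real (card T) + (\<Sum>i\<in>T. (lam i - lam b) * (1 - overlap i / S))"
    unfolding pq(1) using pq(4,5) lam_anti hyperplane ab by (intro bathtub_upper) (auto simp: T_def)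
  also have "\<dots> = (\<Sum>i\<in>T. lam i) - (\<Sum>i\<in>T. overlap i / S * (lam i - lam b))"
    by (simp add: algebra_simps sum_subtractf sum.distrib)
  finally show ?thesis
    unfolding T_def S_def .
qed

lemma partial_sum_lower_bound:
  assumes lam_anti: "\<And>i j. i \<le> j \<Longrightarrow> j < n \<Longrightarrow> lam j \<le> lam i"
    and mu_anti: "\<And>i j. i \<le> j \<Longrightarrow> j < m \<Longrightarrow> mu j \<le> mu i"
    and hyperplane: "n = Suc m" and ab: "a < b" "b \<le> m"
    and S: "(\<Sum>i\<le>b. overlap i) \<noteq> 0"
  shows "(\<Sum>i\<in>{Suc a..b}. lam i) + (\<Sum>i\<in>{Suc a..b}. overlap i / (\<Sum>i\<le>b. overlap i) * (lam a - lam i))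
    \<le> (\<Sum>j\<in>{a..<b}. mu j)"
proof -
  define T where "T = {a..<b}"
  define T' where "T' = {Suc a..b}"
  define S where "S = (\<Sum>i\<le>b. overlap i)"
  have I: "{..<n} - {Suc b..<n} = {..b}" using hyperplane ab by auto
  have card: "card T' = card T" unfolding T_def T'_def by simp
  obtain p q where pq: "(\<Sum>j\<in>{a..<m}. mu j * p j) = (\<Sum>i\<le>b. lam i * q i)"
    "\<And>j. j \<in> {a..<m} \<Longrightarrow> 0 \<le> p j \<and> p j \<le> 1" "(\<Sum>j\<in>{a..<m}. p j) = real (card T)"
    "\<And>i. i \<le> b \<Longrightarrow> 0 \<le> q i \<and> q i \<le> 1 - overlap i / S" "(\<Sum>i\<le>b. q i) = real (card T')"
  proof -
    have "{Suc b..<n} \<subseteq> {..<n}" "{a..<m} \<subseteq> {..<m}" "card {Suc b..<n} + (b - a) \<le> card {a..<m}"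
      "(\<Sum>i\<in>{..<n} - {Suc b..<n}. overlap i) \<noteq> 0"
      using hyperplane ab S unfolding I by auto
    from exists_test_weights[OF this] show thesis
      using that card unfolding I S_def T_def by auto
  qed
  have "(\<Sum>i\<in>T'. lam i) + (\<Sum>i\<in>T'. overlap i / S * (lam a - lam i))
      = lam a * real (card T') - (\<Sum>i\<in>T'. (lam a - lam i) * (1 - overlap i / S))"
    by (simp add: algebra_simps sum_subtractf sum.distrib)
  also have "\<dots> \<le> (\<Sum>i\<le>b. lam i * q i)"
    using pq(4,5) lam_anti hyperplane ab by (intro bathtub_lower) (auto simp: T'_def)
  also have "\<dots> \<le> mu (b - 1) * real (card T) + (\<Sum>j\<in>T. (mu j - mu (b - 1)) * 1)"
    unfolding pq(1)[symmetric] using pq(2,3) mu_anti ab by (intro bathtub_upper) (auto simp: T_def)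
  also have "\<dots> = (\<Sum>j\<in>T. mu j)"
    by (simp add: sum_subtractf)
  finally show ?thesis
    unfolding T_def T'_def S_def .
qed

end

lemma diagonalized_compression_of_eigendata:
  assumes A: "A \<in> carrier_mat n n" "hermitian_mat A"
    and v: "\<And>i. 1 \<le> i \<Longrightarrow> i \<le> n \<Longrightarrow> v i \<in> carrier_vec n"
      "\<And>i. 1 \<le> i \<Longrightarrow> i \<le> n \<Longrightarrow> A *\<^sub>v v i = complex_of_real (lam i) \<cdot>\<^sub>v v i"
      "\<And>i j. 1 \<le> i \<Longrightarrow> i \<le> n \<Longrightarrow> 1 \<le> j \<Longrightarrow> j \<le> n \<Longrightarrow>
        v i \<bullet>c v j = (if i = j then 1 else 0)"
    and U: "U \<in> carrier_mat n m" "adj U * U = 1\<^sub>m m" "adj U *\<^sub>v u = 0\<^sub>v m"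
    and u: "u \<in> carrier_vec n"
    and mu: "char_poly (adj U * A * U) = (\<Prod>j\<in>{1..m}. [:- complex_of_real (mu j), 1:])"
  obtains V Y where "diagonalized_compression n m A V Y u (\<lambda>i. lam (Suc i)) (\<lambda>j. mu (Suc j))"
    and "\<And>i. i < n \<Longrightarrow> col V i = v (Suc i)"
proof -
  have "orthonormal (map (\<lambda>i. v (Suc i)) [0..<n])"
    using v(3) unfolding orthonormal_def by simp
  then obtain V where V: "V \<in> carrier_mat n n" "adj V * V = 1\<^sub>m n"
    "adj V * A * V = mat_diag n (\<lambda>i. complex_of_real (lam (Suc i)))"
    and col_V: "\<And>i. i < n \<Longrightarrow> col V i = v (Suc i)"
    using unitary_eigenbasis[OF A(1), of "\<lambda>i. v (Suc i)" "\<lambda>i. complex_of_real (lam (Suc i))"] v(1,2)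
    by auto
  have cp: "char_poly (adj U * A * U) = (\<Prod>j<m. [:- complex_of_real (mu (Suc j)), 1:])"
    using mu[unfolded One_nat_def prod.atLeast1_atMost_eq] .
  obtain Y where Y: "Y \<in> carrier_mat n m" "adj Y * Y = 1\<^sub>m m"
    "adj Y * A * Y = mat_diag m (\<lambda>j. complex_of_real (mu (Suc j)))" "adj Y *\<^sub>v u = 0\<^sub>v m"
    using hermitian_compression_diagonalization[OF A U(1,2) cp u U(3)] by blast
  have "diagonalized_compression n m A V Y u (\<lambda>i. lam (Suc i)) (\<lambda>j. mu (Suc j))"
    using A(1) V Y u by unfold_locales auto
  with col_V show thesis
    using that by blast
qed

lemma sum_atLeastAtMost_Suc_shift: "(\<Sum>j\<in>{Suc a..b}. g j) = (\<Sum>i\<in>{a..<b}. g (Suc i))"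
  using sum.shift_bounds_Suc_ivl[of g a b] by (simp add: atLeastLessThanSuc_atLeastAtMost)

theorem theorem3p2:
  fixes n :: nat and A :: "complex mat" and lam :: "nat \<Rightarrow> real"
    and v :: "nat \<Rightarrow> complex vec" and u :: "complex vec"
    and U :: "complex mat" and mu :: "nat \<Rightarrow> real" and l r :: nat
  assumes n2: "n \<ge> 2"
    and A_carrier: "A \<in> carrier_mat n n" and A_herm: "hermitian_mat A"
    and lam_sorted: "\<And>i j. 1 \<le> i \<Longrightarrow> i \<le> j \<Longrightarrow> j \<le> n \<Longrightarrow> lam j \<le> lam i"
    and v_carrier: "\<And>i. 1 \<le> i \<Longrightarrow> i \<le> n \<Longrightarrow> v i \<in> carrier_vec n"
    and v_eig: "\<And>i. 1 \<le> i \<Longrightarrow> i \<le> n \<Longrightarrow> A *\<^sub>v v i = complex_of_real (lam i) \<cdot>\<^sub>v v i"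
    and v_orthonormal: "\<And>i j. 1 \<le> i \<Longrightarrow> i \<le> n \<Longrightarrow> 1 \<le> j \<Longrightarrow> j \<le> n \<Longrightarrow>
          v i \<bullet>c v j = (if i = j then 1 else 0)"
    and u_carrier: "u \<in> carrier_vec n" and u_unit: "u \<bullet>c u = 1"
    and U_carrier: "U \<in> carrier_mat n (n - 1)"
    and U_isometry: "adj U * U = 1\<^sub>m (n - 1)"
    and U_perp: "adj U *\<^sub>v u = 0\<^sub>v (n - 1)"
    and mu_sorted: "\<And>i j. 1 \<le> i \<Longrightarrow> i \<le> j \<Longrightarrow> j \<le> n - 1 \<Longrightarrow> mu j \<le> mu i"
    and mu_eig: "char_poly (adj U * A * U) = (\<Prod>j\<in>{1..n-1}. [:- complex_of_real (mu j), 1:])"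
    and lr: "1 \<le> l" "l \<le> r" "r \<le> n - 1"
    and U_nz: "(\<Sum>i\<in>{l..n}. (cmod (u \<bullet>c v i))\<^sup>2) \<noteq> 0"
    and L_nz: "(\<Sum>i\<in>{1..r+1}. (cmod (u \<bullet>c v i))\<^sup>2) \<noteq> 0"
  shows "(\<Sum>j\<in>{l..r}. lam (j+1))
           + (\<Sum>j\<in>{l..r}. (cmod (u \<bullet>c v (j+1)))\<^sup>2 / (\<Sum>i\<in>{1..r+1}. (cmod (u \<bullet>c v i))\<^sup>2)
                              * (lam l - lam (j+1)))
         \<le> (\<Sum>j\<in>{l..r}. mu j)
       \<and> (\<Sum>j\<in>{l..r}. mu j)
         \<le> (\<Sum>j\<in>{l..r}. lam j)
           - (\<Sum>j\<in>{l..r}. (cmod (u \<bullet>c v j))\<^sup>2 / (\<Sum>i\<in>{l..n}. (cmod (u \<bullet>c v i))\<^sup>2)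
                              * (lam j - lam (r+1)))"
proof -
  obtain V Y where dc: "diagonalized_compression n (n - 1) A V Y u (\<lambda>i. lam (Suc i)) (\<lambda>j. mu (Suc j))"
    and col_V: "\<And>i. i < n \<Longrightarrow> col V i = v (Suc i)"
    using diagonalized_compression_of_eigendata[OF A_carrier A_herm v_carrier v_eig v_orthonormal
        U_carrier U_isometry U_perp u_carrier mu_eig] by blast
  interpret diagonalized_compression n "n - 1" A V Y u "\<lambda>i. lam (Suc i)" "\<lambda>j. mu (Suc j)"
    by (rule dc)
  obtain a where a: "l = Suc a" using lr(1) by (cases l) auto
  have nm: "n = Suc (n - 1)" and ar: "a < r" "r \<le> n - 1" using n2 a lr by auto
  have lam_anti: "lam (Suc j) \<le> lam (Suc i)" if "i \<le> j" "j < n" for i j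
    using lam_sorted that by simp
  have mu_anti: "mu (Suc j) \<le> mu (Suc i)" if "i \<le> j" "j < n - 1" for i j
    using mu_sorted that by simp
  have overlap: "(cmod (u \<bullet>c col V i))\<^sup>2 = (cmod (u \<bullet>c v (Suc i)))\<^sup>2" if "i < n" for i
    using col_V[OF that] by simp
  have shift_L: "(\<Sum>i\<in>{1..r+1}. g i) = (\<Sum>i\<le>r. g (Suc i))" for g :: "nat \<Rightarrow> real"
    using sum.shift_bounds_cl_Suc_ivl[of g 0 r] by (simp add: atLeast0AtMost)
  show ?thesis
    using partial_sum_upper_bound[OF lam_anti mu_anti nm ar] partial_sum_lower_bound[OF lam_anti mu_anti nm ar]
      U_nz L_nz ar nm
    unfolding shift_L by (simp add: a overlap sum_atLeastAtMost_Suc_shift cong: sum.cong_simp)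
qed

end
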